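(* Let $\mathbb{A}$ be a medial algebra over a field of characteristic not $2,3$ and let $\mathrm{Idm}^{\times}(\mathbb{A})$ be the set of nonzero idempotents $c$ of $\mathbb{A}$ with $\ker L_c=0$. Then $\mathrm{Idm}^{\times}(\mathbb{A})$, with the algebra multiplication, is a medial idempotent quasigroup. Furthermore, all $c\in\mathrm{Idm}^{\times}(\mathbb{A})$ have the same characteristic polynomial of $L_c$.
   Context: All algebras are commutative, possibly nonassociative, finite-dimensional. Medial: $(xy)(zw)=(xz)(yw)$ identically. $L_c:x\mapsto cx$. A quasigroup is a set with binary operation $\circ$ such that $a\circ x=b$ and $y\circ a=b$ have unique solutions; it is idempotent if $x\circ x=x$ and medial if $(x\circ y)\circ(z\circ w)=(x\circ z)\circ(y\circ w)$. *)

theory Defs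
  imports "Jordan_Normal_Form.Char_Poly"
begin

text \<open>A finite-dimensional algebra over a field 'k is modelled, after choosing a basis,
  as the coordinate space carrier_vec n together with a binary operation mul on it.\<close>

definition algebra_on :: "nat \<Rightarrow> ('k::field vec \<Rightarrow> 'k vec \<Rightarrow> 'k vec) \<Rightarrow> bool" where
  "algebra_on n mul \<longleftrightarrow>
     (\<forall>x\<in>carrier_vec n. \<forall>y\<in>carrier_vec n. mul x y \<in> carrier_vec n) \<and>
     (\<forall>x\<in>carrier_vec n. \<forall>y\<in>carrier_vec n. \<forall>z\<in>carrier_vec n. mul (x + y) z = mul x z + mul y z) \<and>
     (\<forall>x\<in>carrier_vec n. \<forall>y\<in>carrier_vec n. \<forall>z\<in>carrier_vec n. mul x (y + z) = mul x y + mul x z) \<and>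
     (\<forall>a. \<forall>x\<in>carrier_vec n. \<forall>y\<in>carrier_vec n. mul (a \<cdot>\<^sub>v x) y = a \<cdot>\<^sub>v mul x y) \<and>
     (\<forall>a. \<forall>x\<in>carrier_vec n. \<forall>y\<in>carrier_vec n. mul x (a \<cdot>\<^sub>v y) = a \<cdot>\<^sub>v mul x y)"

definition commutative_on :: "nat \<Rightarrow> ('k vec \<Rightarrow> 'k vec \<Rightarrow> 'k vec) \<Rightarrow> bool" where
  "commutative_on n mul \<longleftrightarrow> (\<forall>x\<in>carrier_vec n. \<forall>y\<in>carrier_vec n. mul x y = mul y x)"

definition medial_algebra :: "nat \<Rightarrow> ('k vec \<Rightarrow> 'k vec \<Rightarrow> 'k vec) \<Rightarrow> bool" where
  "medial_algebra n mul \<longleftrightarrow> (\<forall>x\<in>carrier_vec n. \<forall>y\<in>carrier_vec n. \<forall>z\<in>carrier_vec n. \<forall>w\<in>carrier_vec n.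
      mul (mul x y) (mul z w) = mul (mul x z) (mul y w))"

definition L_mat :: "nat \<Rightarrow> ('k::field vec \<Rightarrow> 'k vec \<Rightarrow> 'k vec) \<Rightarrow> 'k vec \<Rightarrow> 'k mat" where
  "L_mat n mul c = mat n n (\<lambda>(i, j). mul c (unit_vec n j) $ i)"

definition Idm_times :: "nat \<Rightarrow> ('k::field vec \<Rightarrow> 'k vec \<Rightarrow> 'k vec) \<Rightarrow> 'k vec set" where
  "Idm_times n mul = {c \<in> carrier_vec n. c \<noteq> 0\<^sub>v n \<and> mul c c = c \<and>
       (\<forall>x\<in>carrier_vec n. mul c x = 0\<^sub>v n \<longrightarrow> x = 0\<^sub>v n)}"

definition quasigroup_on :: "'a set \<Rightarrow> ('a \<Rightarrow> 'a \<Rightarrow> 'a) \<Rightarrow> bool" where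
  "quasigroup_on S f \<longleftrightarrow> (\<forall>x\<in>S. \<forall>y\<in>S. f x y \<in> S) \<and>
     (\<forall>a\<in>S. \<forall>b\<in>S. (\<exists>!x. x \<in> S \<and> f a x = b) \<and> (\<exists>!y. y \<in> S \<and> f y a = b))"

definition idempotent_on :: "'a set \<Rightarrow> ('a \<Rightarrow> 'a \<Rightarrow> 'a) \<Rightarrow> bool" where
  "idempotent_on S f \<longleftrightarrow> (\<forall>x\<in>S. f x x = x)"

definition medial_on :: "'a set \<Rightarrow> ('a \<Rightarrow> 'a \<Rightarrow> 'a) \<Rightarrow> bool" where
  "medial_on S f \<longleftrightarrow> (\<forall>x\<in>S. \<forall>y\<in>S. \<forall>z\<in>S. \<forall>w\<in>S. f (f x y) (f z w) = f (f x z) (f y w))"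

end

theory Submission
  imports Defs
begin

text \<open>For an idempotent a of a medial algebra, a (x y) = (a a) (x y) = (a x) (a y): the left
  multiplication L_a is an algebra endomorphism, and an automorphism when ker L_a = 0.
  Automorphisms map nonzero idempotents with trivial kernel to such, in both directions,
  so a \<cdot> Idm_times = Idm_times, which gives closure and unique left division;
  commutativity gives right division. The same identity says L_(a x) L_a = L_a L_x, so
  L_(c d) is similar to L_d and L_(d c) to L_c, and c d = d c.\<close>

lemma eq_mat_by_mult_vecI:
  fixes A B :: "'a::semiring_1 mat"
  assumes "A \<in> carrier_mat nr nc" "B \<in> carrier_mat nr nc"
    and "\<And>v. v \<in> carrier_vec nc \<Longrightarrow> A *\<^sub>v v = B *\<^sub>v v"
  shows "A = B"
proof (rule eq_matI)
  fix i j assume "i < dim_row B" "j < dim_col B"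
  moreover have "(A *\<^sub>v unit_vec nc j) $ i = (B *\<^sub>v unit_vec nc j) $ i"
    using assms(3) by simp
  ultimately show "A $$ (i, j) = B $$ (i, j)"
    using assms(1,2) by simp
qed (use assms(1,2) in auto)

lemma Idm_times_carrier: "a \<in> Idm_times n mul \<Longrightarrow> a \<in> carrier_vec n"
  by (simp add: Idm_times_def)

locale vec_algebra =
  fixes n :: nat and mul :: "'k::field vec \<Rightarrow> 'k vec \<Rightarrow> 'k vec"
  assumes algebra: "algebra_on n mul"
begin

lemma mul_closed: "x \<in> carrier_vec n \<Longrightarrow> y \<in> carrier_vec n \<Longrightarrow> mul x y \<in> carrier_vec n"
  using algebra unfolding algebra_on_def by blast

lemma mul_add_right:
  "x \<in> carrier_vec n \<Longrightarrow> y \<in> carrier_vec n \<Longrightarrow> z \<in> carrier_vec n \<Longrightarrow> mul x (y + z) = mul x y + mul x z"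
  using algebra unfolding algebra_on_def by blast

lemma mul_smult_right: "x \<in> carrier_vec n \<Longrightarrow> y \<in> carrier_vec n \<Longrightarrow> mul x (a \<cdot>\<^sub>v y) = a \<cdot>\<^sub>v mul x y"
  using algebra unfolding algebra_on_def by blast

lemma mul_zero_right:
  assumes "x \<in> carrier_vec n"
  shows "mul x (0\<^sub>v n) = 0\<^sub>v n"
proof -
  have zero_smult: "(0::'k) \<cdot>\<^sub>v v = 0\<^sub>v n" if "v \<in> carrier_vec n" for v
    using that by auto
  show ?thesis
    using mul_smult_right[OF assms, of "0\<^sub>v n" 0] mul_closed[OF assms, of "0\<^sub>v n"]
    by (simp add: zero_smult)
qed

lemma L_mat_carrier [simp]: "L_mat n mul c \<in> carrier_mat n n"
  by (simp add: L_mat_def)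

lemma L_mat_mult_vec:
  assumes c: "c \<in> carrier_vec n" and x: "x \<in> carrier_vec n"
  shows "L_mat n mul c *\<^sub>v x = mul c x"
proof -
  let ?trunc = "\<lambda>k. vec n (\<lambda>i. if i < k then x $ i else 0)"
  have partial: "mul c (?trunc k) = vec n (\<lambda>i. \<Sum>j<k. mul c (unit_vec n j) $ i * x $ j)"
    if "k \<le> n" for k
    using that
  proof (induction k)
    case 0
    then show ?case using mul_zero_right[OF c] by (simp add: zero_vec_def)
  next
    case (Suc k)
    have "?trunc (Suc k) = ?trunc k + x $ k \<cdot>\<^sub>v unit_vec n k"
      using Suc.prems by (auto simp: unit_vec_def less_Suc_eq)
    then have "mul c (?trunc (Suc k)) = mul c (?trunc k) + x $ k \<cdot>\<^sub>v mul c (unit_vec n k)"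
      using mul_add_right[OF c] mul_smult_right[OF c] by simp
    then show ?case
      using Suc mul_closed[OF c unit_vec_carrier[of n k]] by (auto intro!: eq_vecI simp: mult.commute)
  qed
  have "?trunc n = x"
    using x by auto
  with partial[of n] have "mul c x = vec n (\<lambda>i. \<Sum>j<n. mul c (unit_vec n j) $ i * x $ j)"
    by simp
  also have "\<dots> = L_mat n mul c *\<^sub>v x"
    using x by (auto intro!: eq_vecI simp: L_mat_def scalar_prod_def lessThan_atLeast0)
  finally show ?thesis ..
qed

lemma L_mat_inverse:
  assumes c: "c \<in> carrier_vec n" and ker: "\<forall>x\<in>carrier_vec n. mul c x = 0\<^sub>v n \<longrightarrow> x = 0\<^sub>v n"
  obtains B where "B \<in> carrier_mat n n" "B * L_mat n mul c = 1\<^sub>m n" "L_mat n mul c * B = 1\<^sub>m n"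
proof -
  have "det (L_mat n mul c) \<noteq> 0"
    using det_0_iff_vec_prod_zero_field[of "L_mat n mul c" n] ker L_mat_mult_vec[OF c] by auto
  from det_non_zero_imp_unit[OF L_mat_carrier this, of "()"] that show ?thesis
    unfolding Units_def ring_mat_def by auto
qed

lemma bij_betw_mul_left:
  assumes c: "c \<in> carrier_vec n" and ker: "\<forall>x\<in>carrier_vec n. mul c x = 0\<^sub>v n \<longrightarrow> x = 0\<^sub>v n"
  shows "bij_betw (mul c) (carrier_vec n) (carrier_vec n)"
proof -
  obtain B where B: "B \<in> carrier_mat n n" "B * L_mat n mul c = 1\<^sub>m n" "L_mat n mul c * B = 1\<^sub>m n"
    using L_mat_inverse[OF assms] .
  have "B *\<^sub>v mul c x = x" if "x \<in> carrier_vec n" for x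
    using that B by (simp flip: L_mat_mult_vec[OF c] assoc_mult_mat_vec[of _ n n _ n])
  moreover have "mul c (B *\<^sub>v y) = y" "B *\<^sub>v y \<in> carrier_vec n" if "y \<in> carrier_vec n" for y
    using that B by (simp_all flip: L_mat_mult_vec[OF c] assoc_mult_mat_vec[of _ n n _ n])
  ultimately show ?thesis
    by (intro bij_betwI[where g = "\<lambda>y. B *\<^sub>v y"]) (auto simp: mul_closed c)
qed

lemma Idm_times_image_iff:
  assumes bij: "bij_betw \<phi> (carrier_vec n) (carrier_vec n)" and zero: "\<phi> (0\<^sub>v n) = 0\<^sub>v n"
    and hom: "\<And>x y. x \<in> carrier_vec n \<Longrightarrow> y \<in> carrier_vec n \<Longrightarrow> \<phi> (mul x y) = mul (\<phi> x) (\<phi> y)"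
    and x: "x \<in> carrier_vec n"
  shows "\<phi> x \<in> Idm_times n mul \<longleftrightarrow> x \<in> Idm_times n mul"
proof -
  have inj: "u = v" if "\<phi> u = \<phi> v" "u \<in> carrier_vec n" "v \<in> carrier_vec n" for u v
    using bij that by (auto simp: bij_betw_def inj_on_def)
  have image: "\<phi> u \<in> carrier_vec n" if "u \<in> carrier_vec n" for u
    using bij that by (auto simp: bij_betw_def)
  have zero_iff: "\<phi> v = 0\<^sub>v n \<longleftrightarrow> v = 0\<^sub>v n" if "v \<in> carrier_vec n" for v
    using inj[of v "0\<^sub>v n"] that zero by auto
  have "(\<forall>u\<in>carrier_vec n. mul (\<phi> x) u = 0\<^sub>v n \<longrightarrow> u = 0\<^sub>v n)
      \<longleftrightarrow> (\<forall>v\<in>carrier_vec n. mul (\<phi> x) (\<phi> v) = 0\<^sub>v n \<longrightarrow> \<phi> v = 0\<^sub>v n)"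
    using bij by (metis bij_betw_def imageE imageI)
  also have "\<dots> \<longleftrightarrow> (\<forall>v\<in>carrier_vec n. mul x v = 0\<^sub>v n \<longrightarrow> v = 0\<^sub>v n)"
    using x by (simp add: zero_iff mul_closed flip: hom)
  finally have "(\<forall>u\<in>carrier_vec n. mul (\<phi> x) u = 0\<^sub>v n \<longrightarrow> u = 0\<^sub>v n)
      \<longleftrightarrow> (\<forall>v\<in>carrier_vec n. mul x v = 0\<^sub>v n \<longrightarrow> v = 0\<^sub>v n)" .
  moreover have "mul (\<phi> x) (\<phi> x) = \<phi> x \<longleftrightarrow> mul x x = x"
    using inj x by (auto simp flip: hom simp: mul_closed)
  ultimately show ?thesis
    using x image zero_iff by (simp add: Idm_times_def)
qed

end

locale medial_vec_algebra = vec_algebra n mul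
  for n and mul :: "'k::field vec \<Rightarrow> 'k vec \<Rightarrow> 'k vec" +
  assumes medial: "medial_algebra n mul"
begin

lemma mul_medial:
  "x \<in> carrier_vec n \<Longrightarrow> y \<in> carrier_vec n \<Longrightarrow> z \<in> carrier_vec n \<Longrightarrow> w \<in> carrier_vec n
    \<Longrightarrow> mul (mul x y) (mul z w) = mul (mul x z) (mul y w)"
  using medial unfolding medial_algebra_def by blast

lemma mul_idem_left_distrib:
  assumes "a \<in> carrier_vec n" "mul a a = a" "x \<in> carrier_vec n" "y \<in> carrier_vec n"
  shows "mul a (mul x y) = mul (mul a x) (mul a y)"
  using mul_medial[of a a x y] assms by simp

lemma Idm_times_mul_left_iff:
  assumes a: "a \<in> Idm_times n mul" and x: "x \<in> carrier_vec n"
  shows "mul a x \<in> Idm_times n mul \<longleftrightarrow> x \<in> Idm_times n mul"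
  using a by (intro Idm_times_image_iff bij_betw_mul_left mul_zero_right mul_idem_left_distrib x)
    (auto simp: Idm_times_def)

lemma ex1_mul_left_eq_Idm_times:
  assumes a: "a \<in> Idm_times n mul" and b: "b \<in> Idm_times n mul"
  shows "\<exists>!x. x \<in> Idm_times n mul \<and> mul a x = b"
proof -
  have bij: "bij_betw (mul a) (carrier_vec n) (carrier_vec n)"
    using a by (intro bij_betw_mul_left) (auto simp: Idm_times_def)
  moreover have "b \<in> carrier_vec n"
    using b by (rule Idm_times_carrier)
  ultimately obtain x where x: "x \<in> carrier_vec n" "mul a x = b"
    by (metis bij_betw_def imageE)
  show ?thesis
  proof (rule ex1I)
    show "x \<in> Idm_times n mul \<and> mul a x = b"
      using x a b Idm_times_mul_left_iff by blast
    fix y assume "y \<in> Idm_times n mul \<and> mul a y = b"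
    then show "y = x"
      using x bij_betw_imp_inj_on[OF bij] by (auto simp: Idm_times_def inj_on_def)
  qed
qed

lemma similar_L_mat_mul_left:
  assumes a: "a \<in> Idm_times n mul" and x: "x \<in> carrier_vec n"
  shows "similar_mat (L_mat n mul (mul a x)) (L_mat n mul x)"
proof -
  have a_carrier: "a \<in> carrier_vec n" and idem: "mul a a = a"
    using a by (auto simp: Idm_times_def)
  obtain B where B: "B \<in> carrier_mat n n" "B * L_mat n mul a = 1\<^sub>m n" "L_mat n mul a * B = 1\<^sub>m n"
    using L_mat_inverse a by (auto simp: Idm_times_def)
  have intertwine: "L_mat n mul (mul a x) * L_mat n mul a = L_mat n mul a * L_mat n mul x"
  proof (rule eq_mat_by_mult_vecI[where nr = n])
    fix u :: "'k vec" assume u: "u \<in> carrier_vec n"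
    have "(L_mat n mul (mul a x) * L_mat n mul a) *\<^sub>v u = mul (mul a x) (mul a u)"
      using a_carrier x u by (simp add: assoc_mult_mat_vec[of _ n n _ n] L_mat_mult_vec mul_closed)
    also have "\<dots> = mul a (mul x u)"
      using mul_idem_left_distrib[OF a_carrier idem x u] by simp
    also have "\<dots> = (L_mat n mul a * L_mat n mul x) *\<^sub>v u"
      using a_carrier x u by (simp add: assoc_mult_mat_vec[of _ n n _ n] L_mat_mult_vec mul_closed)
    finally show "(L_mat n mul (mul a x) * L_mat n mul a) *\<^sub>v u = (L_mat n mul a * L_mat n mul x) *\<^sub>v u" .
  qed (metis L_mat_carrier mult_carrier_mat)+
  have "L_mat n mul (mul a x) = L_mat n mul (mul a x) * L_mat n mul a * B"
    using B by (simp add: assoc_mult_mat[of _ n n _ n _ n] right_mult_one_mat[of _ n n])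
  also have "\<dots> = L_mat n mul a * L_mat n mul x * B"
    by (simp add: intertwine)
  finally have "L_mat n mul (mul a x) = L_mat n mul a * L_mat n mul x * B" .
  from similar_matI[OF _ B(3) B(2) this] show ?thesis
    using B(1) by simp
qed

lemma medial_on_Idm_times: "medial_on (Idm_times n mul) mul"
  unfolding medial_on_def by (blast intro: mul_medial Idm_times_carrier)

end

locale comm_medial_vec_algebra = medial_vec_algebra +
  assumes commutative: "commutative_on n mul"
begin

lemma mul_commute: "x \<in> carrier_vec n \<Longrightarrow> y \<in> carrier_vec n \<Longrightarrow> mul x y = mul y x"
  using commutative unfolding commutative_on_def by blast

lemma quasigroup_on_Idm_times: "quasigroup_on (Idm_times n mul) mul"
proof -
  have "mul a x \<in> Idm_times n mul" if "a \<in> Idm_times n mul" "x \<in> Idm_times n mul" for a x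
    using Idm_times_mul_left_iff[OF that(1) Idm_times_carrier[OF that(2)]] that(2) by simp
  moreover have "\<exists>!y. y \<in> Idm_times n mul \<and> mul y a = b"
    if "a \<in> Idm_times n mul" "b \<in> Idm_times n mul" for a b
  proof -
    have "y \<in> Idm_times n mul \<and> mul y a = b \<longleftrightarrow> y \<in> Idm_times n mul \<and> mul a y = b" for y
      using mul_commute[of y a] Idm_times_carrier that(1) by auto
    then show ?thesis
      using ex1_mul_left_eq_Idm_times[OF that] by simp
  qed
  ultimately show ?thesis
    using ex1_mul_left_eq_Idm_times by (simp add: quasigroup_on_def)
qed

lemma char_poly_L_mat_Idm_times_eq:
  assumes c: "c \<in> Idm_times n mul" and d: "d \<in> Idm_times n mul"
  shows "char_poly (L_mat n mul c) = char_poly (L_mat n mul d)"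
proof -
  have "char_poly (L_mat n mul c) = char_poly (L_mat n mul (mul d c))"
    using char_poly_similar[OF similar_L_mat_mul_left[OF d Idm_times_carrier[OF c]]] by simp
  also have "\<dots> = char_poly (L_mat n mul (mul c d))"
    using c d by (simp add: mul_commute Idm_times_carrier)
  also have "\<dots> = char_poly (L_mat n mul d)"
    using char_poly_similar[OF similar_L_mat_mul_left[OF c Idm_times_carrier[OF d]]] .
  finally show ?thesis .
qed

end

theorem proposition3p6:
  fixes n :: nat and mul :: "'k::field vec \<Rightarrow> 'k vec \<Rightarrow> 'k vec"
  assumes char2: "(2::'k) \<noteq> 0" and char3: "(3::'k) \<noteq> 0"
    and alg: "algebra_on n mul" and comm: "commutative_on n mul"
    and med: "medial_algebra n mul"
  shows "quasigroup_on (Idm_times n mul) mul \<and> idempotent_on (Idm_times n mul) mul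
           \<and> medial_on (Idm_times n mul) mul
           \<and> (\<forall>c\<in>Idm_times n mul. \<forall>d\<in>Idm_times n mul.
                char_poly (L_mat n mul c) = char_poly (L_mat n mul d))"
proof -
  interpret comm_medial_vec_algebra n mul
    using alg med comm by unfold_locales
  have "idempotent_on (Idm_times n mul) mul"
    by (simp add: idempotent_on_def Idm_times_def)
  then show ?thesis
    using quasigroup_on_Idm_times medial_on_Idm_times char_poly_L_mat_Idm_times_eq by blast
qed

end
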